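(* Under the hypotheses of Theorem 1 (regular spherically symmetric asymptotically flat Einstein–Maxwell data, electrovacuum outside the ball $\mathcal{B}=\{l\le l_0\}$ of area radius $\mathcal{R}$, dominant energy condition in $\mathcal{B}$, total charge $Q\ne0$, ADM mass $M$), suppose $M\ge |Q|$ and the exterior region $\{l\ge l_0\}$ is untrapped. Then $\mathcal{R}> r_+:=M+\sqrt{M^2-Q^2}\ge |Q|$; in particular $\mathcal{R}>|Q|$. If instead $M\ge|Q|$ and the exterior region is not untrapped, the horizon is the sphere at the largest $l_1\ge l_0$ with $r(l_1)=r_+$, and its area radius is $\mathcal{R}_0=r_+$.
   Context: Metric $dl^2+r(l)^2(d\theta^2+\sin^2\theta d\phi^2)$ on $\mathbb{R}^3$, $r(0)=0$, $r'(0)=1$; $K_{ij}=n_in_jK_l+(h_{ij}-n_in_j)K_r$. Null expansions $\theta^\pm=\frac2r(r'\pm K_rr)$; a region is untrapped if $\theta^+\theta^->0$ there, trapped if $\theta^+\theta^-<0$; a horizon is the outer boundary of a trapped region ($\theta^+\theta^-=0$ there). Asymptotic flatness gives $r(l)\to\infty$ as $l\to\infty$. Electrovacuum: no non-electromagnetic matter, no momentum density, no charge density; no magnetic field. Charge $Q=E(l_0)r(l_0)^2$ where $E$ is the radial electric field. *)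

theory Defs
  imports "HOL-Analysis.Analysis"
begin

text \<open>Spherically symmetric initial data: metric dl^2 + r(l)^2 dOmega^2 on R^3,
  K = n n K_l + (h - n n) K_r, radial electric field E, no magnetic field.
  mu, J, rho_e: energy density, radial momentum density and charge density of the
  non-electromagnetic matter. Units G = 1, Gaussian units.\<close>

definition regular_sph_data ::
  "(real \<Rightarrow> real) \<Rightarrow> (real \<Rightarrow> real) \<Rightarrow> (real \<Rightarrow> real) \<Rightarrow> (real \<Rightarrow> real) \<Rightarrow> bool" where
  "regular_sph_data r Kl Kr E \<longleftrightarrow>
     r 0 = 0 \<and> continuous_on {0..} r \<and> (r has_real_derivative 1) (at 0 within {0..}) \<and>
     (\<forall>l>0. r l > 0 \<and> r differentiable at l \<and> deriv r differentiable at l \<and>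
             continuous (at l) Kl \<and> Kr differentiable at l \<and> E differentiable at l)"

definition einstein_maxwell_constraints ::
  "(real \<Rightarrow> real) \<Rightarrow> (real \<Rightarrow> real) \<Rightarrow> (real \<Rightarrow> real) \<Rightarrow> (real \<Rightarrow> real) \<Rightarrow>
   (real \<Rightarrow> real) \<Rightarrow> (real \<Rightarrow> real) \<Rightarrow> (real \<Rightarrow> real) \<Rightarrow> bool" where
  "einstein_maxwell_constraints r Kl Kr E mu J rho_e \<longleftrightarrow>
     (\<forall>l>0.
        (2 / (r l)^2) * (1 - (deriv r l)^2 - 2 * r l * deriv (deriv r) l)
          + 4 * Kl l * Kr l + 2 * (Kr l)^2 = 16 * pi * mu l + 2 * (E l)^2
      \<and> - 2 * deriv Kr l + 2 * deriv r l / r l * (Kl l - Kr l) = 8 * pi * J l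
      \<and> deriv (\<lambda>s. (r s)^2 * E s) l = 4 * pi * (r l)^2 * rho_e l)"

definition electrovacuum_outside ::
  "real \<Rightarrow> (real \<Rightarrow> real) \<Rightarrow> (real \<Rightarrow> real) \<Rightarrow> (real \<Rightarrow> real) \<Rightarrow> bool" where
  "electrovacuum_outside l0 mu J rho_e \<longleftrightarrow>
     (\<forall>l\<ge>l0. mu l = 0 \<and> J l = 0 \<and> rho_e l = 0)"

definition dominant_energy_in_ball :: "real \<Rightarrow> (real \<Rightarrow> real) \<Rightarrow> (real \<Rightarrow> real) \<Rightarrow> bool" where
  "dominant_energy_in_ball l0 mu J \<longleftrightarrow> (\<forall>l. 0 < l \<and> l \<le> l0 \<longrightarrow> mu l \<ge> \<bar>J l\<bar>)"

definition asymptotically_flat ::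
  "(real \<Rightarrow> real) \<Rightarrow> (real \<Rightarrow> real) \<Rightarrow> (real \<Rightarrow> real) \<Rightarrow> bool" where
  "asymptotically_flat r Kl Kr \<longleftrightarrow>
     filterlim r at_top at_top \<and>
     (\<exists>C. \<forall>\<^sub>F l in at_top. \<bar>Kl l\<bar> * (r l)^2 \<le> C \<and> \<bar>Kr l\<bar> * (r l)^2 \<le> C)"

text \<open>ADM mass of the spherically symmetric metric (area-radius form:
  M = lim r/2 (1 - 1/g_rr), with g_rr = 1/r'^2).\<close>
definition adm_mass :: "(real \<Rightarrow> real) \<Rightarrow> real \<Rightarrow> bool" where
  "adm_mass r M \<longleftrightarrow> ((\<lambda>l. r l / 2 * (1 - (deriv r l)^2)) \<longlongrightarrow> M) at_top"

definition theta_plus :: "(real \<Rightarrow> real) \<Rightarrow> (real \<Rightarrow> real) \<Rightarrow> real \<Rightarrow> real" where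
  "theta_plus r Kr l = 2 / r l * (deriv r l + Kr l * r l)"

definition theta_minus :: "(real \<Rightarrow> real) \<Rightarrow> (real \<Rightarrow> real) \<Rightarrow> real \<Rightarrow> real" where
  "theta_minus r Kr l = 2 / r l * (deriv r l - Kr l * r l)"

definition untrapped_on :: "real set \<Rightarrow> (real \<Rightarrow> real) \<Rightarrow> (real \<Rightarrow> real) \<Rightarrow> bool" where
  "untrapped_on S r Kr \<longleftrightarrow> (\<forall>l\<in>S. theta_plus r Kr l * theta_minus r Kr l > 0)"

text \<open>Horizon at l1: marginal sphere (theta+ theta- = 0) bounding the exterior untrapped
  region, i.e. the outer boundary of the (marginally) trapped region.\<close>
definition is_horizon :: "(real \<Rightarrow> real) \<Rightarrow> (real \<Rightarrow> real) \<Rightarrow> real \<Rightarrow> bool" where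
  "is_horizon r Kr l1 \<longleftrightarrow>
     theta_plus r Kr l1 * theta_minus r Kr l1 = 0 \<and>
     (\<forall>l>l1. theta_plus r Kr l * theta_minus r Kr l > 0)"

definition r_plus :: "real \<Rightarrow> real \<Rightarrow> real" where
  "r_plus M Q = M + sqrt (M^2 - Q^2)"

end

theory Submission
  imports Defs
begin

text \<open>In the electrovacuum exterior the Gauss law makes \<open>r\<^sup>2 E\<close> constant, so \<open>E = Q/r\<^sup>2\<close>,
  and the constraint equations then make the charged Hawking mass
  \<open>m = r/2 (1 - r'\<^sup>2 + K\<^sub>r\<^sup>2 r\<^sup>2) + Q\<^sup>2/(2r)\<close> constant; asymptotic flatness identifies
  this constant with the ADM mass \<open>M\<close>. Since
  \<open>\<theta>\<^sup>+ \<theta>\<^sup>- = 4 (r\<^sup>2 - 2 m r + Q\<^sup>2)/r\<^sup>4 = 4 (r - r\<^sub>+)(r - r\<^sub>-)/r\<^sup>4\<close>, the exterior is untrapped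
  wherever \<open>r > r\<^sub>+\<close> and marginally trapped where \<open>r = r\<^sub>+\<close>. As \<open>r \<rightarrow> \<infinity>\<close>, the level set
  \<open>r = r\<^sub>+\<close> has a largest element whenever \<open>r\<close> drops to \<open>r\<^sub>+\<close> somewhere outside the ball,
  and this last crossing is the horizon.\<close>

definition charged_mass :: "(real \<Rightarrow> real) \<Rightarrow> (real \<Rightarrow> real) \<Rightarrow> real \<Rightarrow> real \<Rightarrow> real" where
  "charged_mass r Kr Q l =
     r l / 2 * (1 - (deriv r l)^2 + (Kr l)^2 * (r l)^2) + Q^2 / (2 * r l)"

lemma DERIV_zero_imp_constant_on_atLeast:
  fixes f :: "real \<Rightarrow> real"
  assumes deriv0: "\<And>x. x \<ge> a \<Longrightarrow> DERIV f x :> 0" and "x \<ge> a"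
  shows "f x = f a"
proof (cases "x = a")
  case False
  then have "a < x" using assms(2) by simp
  moreover have "continuous_on {a..x} f"
    by (intro continuous_at_imp_continuous_on ballI DERIV_isCont) (use deriv0 in auto)
  ultimately show ?thesis using DERIV_isconst2[of a x f x] deriv0 by auto
qed simp

lemma last_crossing_of_level:
  fixes f :: "real \<Rightarrow> real"
  assumes cont: "continuous_on {a..} f" and unbounded: "filterlim f at_top at_top"
    and "f a \<le> c"
  shows "\<exists>x\<ge>a. f x = c \<and> (\<forall>y>x. f y > c)"
proof -
  obtain L where L: "\<And>y. y \<ge> L \<Longrightarrow> f y > c"
    using unbounded unfolding filterlim_at_top_dense eventually_at_top_linorder by blast
  have hit: "\<exists>x\<ge>b. f x = c" if "b \<ge> a" "f b \<le> c" for b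
  proof -
    have "continuous_on {b..max L b} f"
      by (rule continuous_on_subset[OF cont]) (use that(1) in auto)
    then have "\<exists>x. b \<le> x \<and> x \<le> max L b \<and> f x = c"
      using L[of "max L b"] that(2) by (intro IVT') auto
    then show ?thesis by blast
  qed
  define S where "S = {a..} \<inter> f -` {c}"
  obtain x0 where "x0 \<in> S" using hit[of a] assms(3) by (auto simp: S_def)
  moreover have "closed S"
    unfolding S_def by (rule continuous_closed_preimage) (use cont in auto)
  moreover have bdd: "bdd_above S"
  proof (rule bdd_aboveI)
    show "y \<le> L" if "y \<in> S" for y
      using that L[of y] by (cases "L \<le> y") (auto simp: S_def)
  qed
  ultimately have "Sup S \<in> S" using closed_contains_Sup by blast
  moreover have "f y > c" if "y > Sup S" for y
  proof (rule ccontr)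
    assume "\<not> f y > c"
    moreover have "y \<ge> a" using that \<open>Sup S \<in> S\<close> by (auto simp: S_def)
    ultimately obtain z where "z \<ge> y" "f z = c" using hit[of y] by auto
    then have "z \<in> S" using that \<open>Sup S \<in> S\<close> by (auto simp: S_def)
    with cSup_upper[OF this bdd] \<open>z \<ge> y\<close> that show False by simp
  qed
  ultimately show ?thesis by (auto simp: S_def)
qed

lemma regular_sph_data_DERIV:
  assumes "regular_sph_data r Kl Kr E" and "l > 0"
  shows "r l > 0" and "DERIV r l :> deriv r l" and "DERIV (deriv r) l :> deriv (deriv r) l"
    and "DERIV Kr l :> deriv Kr l" and "DERIV E l :> deriv E l"
  using assms DERIV_deriv_iff_real_differentiable by (auto simp: regular_sph_data_def)

lemma gauss_law_charge_constant:
  assumes reg: "regular_sph_data r Kl Kr E"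
    and con: "einstein_maxwell_constraints r Kl Kr E mu J rho_e"
    and "l0 > 0" and ev: "electrovacuum_outside l0 mu J rho_e" and "l \<ge> l0"
  shows "(r l)^2 * E l = (r l0)^2 * E l0"
proof (rule DERIV_zero_imp_constant_on_atLeast[where f = "\<lambda>s. (r s)^2 * E s"])
  fix s assume "s \<ge> l0"
  then have s: "s > 0" using \<open>l0 > 0\<close> by simp
  have "DERIV (\<lambda>s. (r s)^2 * E s) s :> 2 * r s * deriv r s * E s + (r s)^2 * deriv E s"
    using regular_sph_data_DERIV[OF reg s] by (auto intro!: derivative_eq_intros)
  moreover have "deriv (\<lambda>s. (r s)^2 * E s) s = 0"
    using con ev s \<open>s \<ge> l0\<close> by (auto simp: einstein_maxwell_constraints_def electrovacuum_outside_def)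
  ultimately show "DERIV (\<lambda>s. (r s)^2 * E s) s :> 0" using DERIV_imp_deriv by metis
qed (use \<open>l \<ge> l0\<close> in simp)

lemma charged_mass_DERIV_zero:
  assumes reg: "regular_sph_data r Kl Kr E"
    and con: "einstein_maxwell_constraints r Kl Kr E mu J rho_e"
    and l: "l > 0" and vac: "mu l = 0" "J l = 0" and charge: "(r l)^2 * E l = Q"
  shows "DERIV (charged_mass r Kr Q) l :> 0"
proof -
  define R p q k k' kl where "R = r l" and "p = deriv r l" and "q = deriv (deriv r) l"
    and "k = Kr l" and "k' = deriv Kr l" and "kl = Kl l"
  have R: "R > 0" using regular_sph_data_DERIV(1)[OF reg l] by (simp add: R_def)
  have "E l = Q / R^2" using charge R by (simp add: R_def field_simps)
  then have hamiltonian: "2 / R^2 * (1 - p^2 - 2*R*q) + 4*kl*k + 2*k^2 = 2 * (Q / R^2)^2"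
    and momentum: "- 2*k' + 2*p/R * (kl - k) = 0"
    using con l vac by (auto simp: einstein_maxwell_constraints_def R_def p_def q_def k_def k'_def kl_def)
  \<comment> \<open>The momentum constraint eliminates \<open>K\<^sub>r'\<close> and the Hamiltonian constraint \<open>r''\<close>.\<close>
  have k': "k' = p * (kl - k) / R" using momentum R by (simp add: field_simps)
  have "1 - p^2 - 2*R*q = R^2/2 * (2 * (Q / R^2)^2 - 4*kl*k - 2*k^2)"
    using hamiltonian R by (simp add: field_simps)
  also have "\<dots> = Q^2 / R^2 - R^2 * (2*kl*k + k^2)"
    using R by (simp add: field_simps power2_eq_square)
  finally have q: "2*R*q = 1 - p^2 + R^2 * (2*kl*k + k^2) - Q^2 / R^2" by linarith
  have "DERIV (charged_mass r Kr Q) l :>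
      p/2 * (1 - p^2 + k^2 * R^2 - 2*R*q) + k*k'*R^3 + k^2*R^2*p - Q^2 * p / (2 * R^2)"
    unfolding charged_mass_def[abs_def] R_def p_def q_def k_def k'_def
    using regular_sph_data_DERIV[OF reg l]
    by (auto intro!: derivative_eq_intros simp: power2_eq_square power3_eq_cube field_simps)
  moreover have "p/2 * (1 - p^2 + k^2 * R^2 - 2*R*q) + k*k'*R^3 + k^2*R^2*p - Q^2 * p / (2 * R^2) = 0"
    unfolding q k' using R by (simp add: field_simps power2_eq_square power3_eq_cube)
  ultimately show ?thesis by simp
qed

lemma charged_mass_tendsto_adm_mass:
  assumes af: "asymptotically_flat r Kl Kr" and "adm_mass r M"
  shows "(charged_mass r Kr Q \<longlongrightarrow> M) at_top"
proof -
  obtain C where C: "\<forall>\<^sub>F l in at_top. \<bar>Kr l\<bar> * (r l)^2 \<le> C"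
    using af unfolding asymptotically_flat_def by (metis (mono_tags, lifting) eventually_mono)
  have rinf: "filterlim r at_top at_top" using af unfolding asymptotically_flat_def by blast
  then have rpos: "\<forall>\<^sub>F l in at_top. r l > 0" by (simp add: filterlim_at_top_dense)
  \<comment> \<open>The charged mass exceeds the ADM integrand by \<open>B = O(1/r)\<close>, as \<open>K\<^sub>r = O(r\<^sup>-\<^sup>2)\<close>.\<close>
  define B where "B l = (Kr l)^2 * (r l)^3 / 2 + Q^2 / (2 * r l)" for l
  have B0: "(B \<longlongrightarrow> 0) at_top"
  proof (rule tendsto_sandwich)
    show "\<forall>\<^sub>F l in at_top. 0 \<le> B l" using rpos by eventually_elim (auto simp: B_def)
    show "\<forall>\<^sub>F l in at_top. B l \<le> (C^2/2 + Q^2/2) * inverse (r l)"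
      using rpos C
    proof eventually_elim
      case (elim l)
      have "(Kr l)^2 * (r l)^3 = (\<bar>Kr l\<bar> * (r l)^2)^2 / r l"
        using elim by (simp add: field_simps power2_eq_square power3_eq_cube)
      also have "\<dots> \<le> C^2 / r l"
        using elim by (intro divide_right_mono power_mono) auto
      finally show ?case using elim by (simp add: B_def field_simps)
    qed
    show "((\<lambda>l. (C^2/2 + Q^2/2) * inverse (r l)) \<longlongrightarrow> 0) at_top"
      using tendsto_mult_right_zero[OF tendsto_inverse_0_at_top[OF rinf]] by simp
  qed simp
  have "charged_mass r Kr Q = (\<lambda>l. r l / 2 * (1 - (deriv r l)^2) + B l)"
    by (simp add: fun_eq_iff charged_mass_def B_def algebra_simps power2_eq_square power3_eq_cube)
  then show ?thesis
    using tendsto_add[OF \<open>adm_mass r M\<close>[unfolded adm_mass_def] B0] by simp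
qed

lemma expansion_product_charged_mass:
  assumes "r l > 0"
  shows "theta_plus r Kr l * theta_minus r Kr l
           = 4 * ((r l)^2 - 2 * charged_mass r Kr Q l * r l + Q^2) / (r l)^4"
  using assms
  by (simp add: theta_plus_def theta_minus_def charged_mass_def field_simps power2_eq_square power4_eq_xxxx)

lemma r_plus_factorization:
  assumes "\<bar>Q\<bar> \<le> M"
  shows "x^2 - 2*M*x + Q^2 = (x - r_plus M Q) * (x - (M - sqrt (M^2 - Q^2)))"
proof -
  have "(sqrt (M^2 - Q^2))^2 = M^2 - Q^2"
    using assms abs_le_square_iff[of Q M] by simp
  then show ?thesis by (simp add: r_plus_def algebra_simps power2_eq_square)
qed

lemma
  assumes "\<bar>Q\<bar> \<le> M"
  shows abs_le_r_plus: "\<bar>Q\<bar> \<le> r_plus M Q"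
    and r_minus_le_r_plus: "M - sqrt (M^2 - Q^2) \<le> r_plus M Q"
proof -
  have "sqrt (M^2 - Q^2) \<ge> 0" using assms abs_le_square_iff[of Q M] by simp
  then show "\<bar>Q\<bar> \<le> r_plus M Q" and "M - sqrt (M^2 - Q^2) \<le> r_plus M Q"
    using assms unfolding r_plus_def by linarith+
qed

lemma charged_mass_eq_adm_mass_outside:
  assumes reg: "regular_sph_data r Kl Kr E"
    and con: "einstein_maxwell_constraints r Kl Kr E mu J rho_e"
    and "l0 > 0" and ev: "electrovacuum_outside l0 mu J rho_e"
    and af: "asymptotically_flat r Kl Kr" and adm: "adm_mass r M"
    and Q: "Q = E l0 * (r l0)^2" and "l \<ge> l0"
  shows "charged_mass r Kr Q l = M"
proof -
  have const: "charged_mass r Kr Q s = charged_mass r Kr Q l0" if "s \<ge> l0" for s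
  proof (rule DERIV_zero_imp_constant_on_atLeast[OF _ that])
    fix x assume "x \<ge> l0"
    moreover have "(r x)^2 * E x = Q"
      using gauss_law_charge_constant[OF reg con \<open>l0 > 0\<close> ev \<open>x \<ge> l0\<close>] Q by simp
    ultimately show "DERIV (charged_mass r Kr Q) x :> 0"
      using charged_mass_DERIV_zero[OF reg con] ev \<open>l0 > 0\<close>
      by (simp add: electrovacuum_outside_def)
  qed
  have eventually_const: "\<forall>\<^sub>F s in at_top. charged_mass r Kr Q s = charged_mass r Kr Q l0"
    using eventually_ge_at_top[of l0] by eventually_elim (rule const)
  from Lim_transform_eventually[OF charged_mass_tendsto_adm_mass[OF af adm, of Q] eventually_const]
  have "charged_mass r Kr Q l0 = M" by (simp add: tendsto_const_iff)
  then show ?thesis using const[OF \<open>l \<ge> l0\<close>] by simp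
qed

lemma expansion_product_outside:
  assumes "regular_sph_data r Kl Kr E"
    and "einstein_maxwell_constraints r Kl Kr E mu J rho_e"
    and "l0 > 0" and "electrovacuum_outside l0 mu J rho_e"
    and "asymptotically_flat r Kl Kr" and "adm_mass r M"
    and "Q = E l0 * (r l0)^2" and "\<bar>Q\<bar> \<le> M" and "l \<ge> l0"
  shows "theta_plus r Kr l * theta_minus r Kr l
           = 4 * ((r l - r_plus M Q) * (r l - (M - sqrt (M^2 - Q^2)))) / (r l)^4"
proof -
  have "r l > 0" using regular_sph_data_DERIV(1)[OF assms(1)] assms(3,9) by simp
  from expansion_product_charged_mass[of r l Kr Q, OF this] show ?thesis
    unfolding charged_mass_eq_adm_mass_outside[OF assms(1-7,9)] r_plus_factorization[OF \<open>\<bar>Q\<bar> \<le> M\<close>] .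
qed

lemma expansion_product_sign_outside:
  assumes "regular_sph_data r Kl Kr E"
    and "einstein_maxwell_constraints r Kl Kr E mu J rho_e"
    and "l0 > 0" and "electrovacuum_outside l0 mu J rho_e"
    and "asymptotically_flat r Kl Kr" and "adm_mass r M"
    and "Q = E l0 * (r l0)^2" and "\<bar>Q\<bar> \<le> M" and "l \<ge> l0"
  shows expansion_product_marginal:
      "r l = r_plus M Q \<Longrightarrow> theta_plus r Kr l * theta_minus r Kr l = 0"
    and expansion_product_pos:
      "r l > r_plus M Q \<Longrightarrow> theta_plus r Kr l * theta_minus r Kr l > 0"
proof -
  note product = expansion_product_outside[OF assms]
  show "theta_plus r Kr l * theta_minus r Kr l = 0" if "r l = r_plus M Q"
    using product that by simp
  show "theta_plus r Kr l * theta_minus r Kr l > 0" if "r l > r_plus M Q"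
  proof -
    have "r l > 0" using that abs_le_r_plus[OF \<open>\<bar>Q\<bar> \<le> M\<close>] by linarith
    with that r_minus_le_r_plus[OF \<open>\<bar>Q\<bar> \<le> M\<close>] show ?thesis using product by simp
  qed
qed

theorem mainTheorem5:
  fixes r Kl Kr E mu J rho_e :: "real \<Rightarrow> real" and l0 M Q :: real
  assumes "regular_sph_data r Kl Kr E"
    and "einstein_maxwell_constraints r Kl Kr E mu J rho_e"
    and "l0 > 0"
    and "electrovacuum_outside l0 mu J rho_e"
    and "dominant_energy_in_ball l0 mu J"
    and "asymptotically_flat r Kl Kr"
    and "adm_mass r M"
    and "Q = E l0 * (r l0)^2"
    and "Q \<noteq> 0"
    and "M \<ge> \<bar>Q\<bar>"
  shows "(untrapped_on {l0..} r Kr \<longrightarrow>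
            r l0 > r_plus M Q \<and> r_plus M Q \<ge> \<bar>Q\<bar> \<and> r l0 > \<bar>Q\<bar>)
       \<and> (\<not> untrapped_on {l0..} r Kr \<longrightarrow>
            (\<exists>l1\<ge>l0. r l1 = r_plus M Q \<and> (\<forall>l>l1. r l \<noteq> r_plus M Q)
                     \<and> is_horizon r Kr l1))"
proof -
  \<comment> \<open>The dominant energy condition and \<open>Q \<noteq> 0\<close> only matter inside the ball; this argument
    takes place entirely in the electrovacuum exterior.\<close>
  let ?rp = "r_plus M Q"
  note marginal = expansion_product_marginal[OF assms(1-4,6-8,10)]
    and untrapped = expansion_product_pos[OF assms(1-4,6-8,10)]
  have cont: "continuous_on {a..} r" if "a \<ge> l0" for a
    using assms(1,3) that by (auto simp: regular_sph_data_def elim: continuous_on_subset)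
  have unbounded: "filterlim r at_top at_top"
    using assms(6) by (simp add: asymptotically_flat_def)
  show ?thesis
  proof (rule conjI; rule impI)
    assume "untrapped_on {l0..} r Kr"
    then have "r l0 > ?rp"
      using last_crossing_of_level[OF cont[of l0] unbounded, of ?rp] marginal
      by (force simp: untrapped_on_def)
    with abs_le_r_plus[OF assms(10)] show "r l0 > ?rp \<and> ?rp \<ge> \<bar>Q\<bar> \<and> r l0 > \<bar>Q\<bar>" by simp
  next
    assume "\<not> untrapped_on {l0..} r Kr"
    then obtain l2 where l2: "l2 \<ge> l0" "r l2 \<le> ?rp"
      using untrapped by (force simp: untrapped_on_def not_less[symmetric])
    then obtain l1 where "l1 \<ge> l2" "r l1 = ?rp" "\<forall>l>l1. r l > ?rp"
      using last_crossing_of_level[OF cont[of l2] unbounded] by blast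
    then show "\<exists>l1\<ge>l0. r l1 = ?rp \<and> (\<forall>l>l1. r l \<noteq> ?rp) \<and> is_horizon r Kr l1"
      using l2(1) marginal untrapped
      by (intro exI[of _ l1]) (auto simp: is_horizon_def less_imp_neq)
  qed
qed

end
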